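(* Let $G$ be a 2-ichromatic ordered graph with vertices $v_1<\dots<v_{m+n}$ such that $\{v_1,\ldots,v_m\}$ and $\{v_{m+1},\ldots,v_{m+n}\}$ are the parts of an interval 2-coloring of $G$ (i.e., both are independent sets). If $v_1v_{m+1}$, $v_mv_{m+n}$ and $v_mv_{m+1}$ are edges of $G$, then $R(G)\ge 5r+1$, where $r=\min(m,n)-1$.
   Context: An ordered graph is a graph together with a specified linear ordering of its vertex set. An ordered graph $G$ is contained in an ordered graph $H$ if there is an order-preserving injection $V(G)\to V(H)$ mapping edges to edges. An interval coloring of an ordered graph is a partition of its vertex set into independent sets each consisting of consecutive vertices (called parts); an ordered graph is 2-ichromatic if its minimum number of parts in an interval coloring is 2. $R(G)$ denotes the 2-color ordered Ramsey number: the minimum $N$ such that every 2-coloring of the edges of the ordered complete graph on $N$ vertices contains a monochromatic copy of $G$. *)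

theory Defs
  imports Main
begin

text \<open>A red/blue colouring of the edges of the
ordered complete graph K_N on {0..<N} is a function c :: nat => nat => bool, where
c i j (for i < j < N) is the colour of edge ij.\<close>

definition ordered_graph :: "nat \<Rightarrow> (nat \<times> nat) set \<Rightarrow> bool" where
  "ordered_graph k E \<longleftrightarrow> (\<forall>(i,j)\<in>E. i < j \<and> j < k)"

definition independent :: "(nat \<times> nat) set \<Rightarrow> nat set \<Rightarrow> bool" where
  "independent E S \<longleftrightarrow> (\<forall>(i,j)\<in>E. \<not> (i \<in> S \<and> j \<in> S))"

definition has_mono_copy :: "nat \<Rightarrow> (nat \<times> nat) set \<Rightarrow> nat \<Rightarrow> (nat \<Rightarrow> nat \<Rightarrow> bool) \<Rightarrow> bool" where
  "has_mono_copy k E N c \<longleftrightarrow>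
     (\<exists>f b. strict_mono_on {..<k} f \<and> f ` {..<k} \<subseteq> {..<N} \<and>
            (\<forall>(i,j)\<in>E. c (f i) (f j) = b))"

definition ordered_ramsey :: "nat \<Rightarrow> (nat \<times> nat) set \<Rightarrow> nat" where
  "ordered_ramsey k E = (LEAST N. \<forall>c. has_mono_copy k E N c)"

definition interval_coloring :: "nat \<Rightarrow> (nat \<times> nat) set \<Rightarrow> nat list \<Rightarrow> bool" where
  "interval_coloring k E bs \<longleftrightarrow>
     (bs \<noteq> [] \<and> sorted_wrt (<) (0 # bs) \<and> last bs = k \<and>
          (\<forall>t < length bs. independent E {(0 # bs) ! t ..< bs ! t}))"

definition interval_chromatic :: "nat \<Rightarrow> (nat \<times> nat) set \<Rightarrow> nat" where
  "interval_chromatic k E = (LEAST q. \<exists>bs. length bs = q \<and> interval_coloring k E bs)"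

end

theory Submission
  imports Defs "HOL-Library.Ramsey"
begin

text \<open>Split {0..<5r} into five blocks of r consecutive vertices and colour an edge by a
fixed red/blue colouring of the pairs of blocks (pairs inside a block included).  Any copy
of G sends v_1 < v_m < v_{m+1} < v_{m+n} to vertices x < y \<le> z < w, where x and y lie in
different blocks (v_1..v_m are at least r+1 vertices) and likewise z and w.  So it suffices
that the block colouring admits no block indices i < j \<le> k < l < 5 with ik, jk and jl of
one colour, which is a finite check.  Since the Ramsey number is defined as a least element,
its existence (from Ramsey's theorem) is needed as well.\<close>

lemma strict_mono_on_lessThan_add_diff_le:
  fixes f :: "nat \<Rightarrow> nat"
  assumes "strict_mono_on {..<K} f" "i \<le> j" "j < K"
  shows "f i + (j - i) \<le> f j"
  using assms(2,3)
proof (induction j)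
  case 0
  then show ?case by simp
next
  case (Suc j)
  show ?case
  proof (cases "i = Suc j")
    case False
    then have "i \<le> j" using Suc.prems by simp
    moreover have "f j < f (Suc j)"
      using Suc.prems by (intro strict_mono_onD[OF assms(1)]) auto
    ultimately show ?thesis using Suc by simp
  qed simp
qed


lemma has_mono_copy_mono:
  assumes "has_mono_copy k E M c" "M \<le> N"
  shows "has_mono_copy k E N c"
  using assms unfolding has_mono_copy_def by fastforce

lemma has_mono_copy_if_monochromatic_set:
  assumes "ordered_graph k E" "R \<subseteq> {..<N}" "card R = k"
    and mono: "\<And>p q. p \<in> R \<Longrightarrow> q \<in> R \<Longrightarrow> p < q \<Longrightarrow> c p q = b"
  shows "has_mono_copy k E N c"
proof -
  have "finite R" using assms(2) finite_subset by blast
  define f where "f = (!) (sorted_list_of_set R)"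
  have f_mono: "strict_mono_on {..<k} f"
    by (rule strict_mono_onI)
      (use \<open>finite R\<close> assms(3) in \<open>auto simp: f_def sorted_wrt_nth_less\<close>)
  have f_in: "f i \<in> R" if "i < k" for i
    using that \<open>finite R\<close> assms(3) nth_mem unfolding f_def
    by (metis length_sorted_list_of_set set_sorted_list_of_set)
  have f_edges: "c (f i) (f j) = b" if "(i, j) \<in> E" for i j
  proof -
    have "i < j" "j < k" using that assms(1) unfolding ordered_graph_def by auto
    then show ?thesis
      using mono[OF f_in f_in strict_mono_onD[OF f_mono]] by simp
  qed
  show ?thesis
    unfolding has_mono_copy_def
  proof (intro exI conjI)
    show "f ` {..<k} \<subseteq> {..<N}" using f_in assms(2) by auto
    show "\<forall>(i, j) \<in> E. c (f i) (f j) = b" using f_edges by blast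
  qed (rule f_mono)
qed

lemma ordered_ramsey_exists:
  assumes "ordered_graph k E"
  shows "\<exists>N. \<forall>c. has_mono_copy k E N c"
proof -
  obtain N where N: "\<And>V EE :: nat set set. finite V \<Longrightarrow> card V \<ge> N \<Longrightarrow>
      \<exists>R \<subseteq> V. card R = k \<and> clique R EE \<or> card R = k \<and> indep R EE"
    using ramsey2[of k k] by blast
  have "has_mono_copy k E N c" for c
  proof -
    define red where "red = {{p, q} | p q. p < q \<and> c p q}"
    have red_iff: "{p, q} \<in> red \<longleftrightarrow> c p q" if "p < q" for p q
      using that unfolding red_def by (auto simp: doubleton_eq_iff)
    obtain R where R: "R \<subseteq> {..<N}" "card R = k" and "clique R red \<or> indep R red"
      using N[of "{..<N}" red] by auto
    then obtain b where "\<And>p q. p \<in> R \<Longrightarrow> q \<in> R \<Longrightarrow> p < q \<Longrightarrow> c p q = b"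
      unfolding clique_def indep_def using red_iff by (metis less_irrefl)
    then show ?thesis
      using has_mono_copy_if_monochromatic_set[OF assms R] by blast
  qed
  then show ?thesis by blast
qed

lemma less_ordered_ramsey:
  assumes "ordered_graph k E" "\<not> has_mono_copy k E N c"
  shows "N < ordered_ramsey k E"
proof (rule ccontr)
  assume "\<not> N < ordered_ramsey k E"
  moreover have "\<forall>c. has_mono_copy k E (ordered_ramsey k E) c"
    unfolding ordered_ramsey_def using ordered_ramsey_exists[OF assms(1)] by (rule LeastI_ex)
  ultimately show False
    using assms(2) has_mono_copy_mono by (meson not_less)
qed


definition five_colouring :: "nat \<Rightarrow> nat \<Rightarrow> bool" where
  "five_colouring a b \<longleftrightarrow> (a, b) \<in> {(1,1), (1,3), (1,4), (2,2), (2,4), (3,4)}"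

lemma five_colouring_avoids_pattern:
  assumes "i < j" "j \<le> k" "k < l" "l < 5"
  shows "\<not> (five_colouring i k = b \<and> five_colouring j k = b \<and> five_colouring j l = b)"
proof -
  have "\<forall>l < Suc (Suc (Suc (Suc (Suc 0)))). \<forall>k < l. \<forall>j < Suc k. \<forall>i < j.
      \<not> (five_colouring i k = b \<and> five_colouring j k = b \<and> five_colouring j l = b)"
    unfolding All_less_Suc not_less0 simp_thms by (cases b) (simp_all add: five_colouring_def)
  then show ?thesis
    using assms by (simp add: numeral_eq_Suc less_Suc_eq_le)
qed

definition block_colouring :: "nat \<Rightarrow> nat \<Rightarrow> nat \<Rightarrow> bool" where
  "block_colouring r p q = five_colouring (p div r) (q div r)"

lemma block_colouring_avoids_pattern:
  assumes "0 < r" "x + r \<le> y" "y \<le> z" "z + r \<le> w" "w < 5 * r"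
  shows "\<not> (block_colouring r x z = b \<and> block_colouring r y z = b \<and> block_colouring r y w = b)"
proof -
  have "x div r < y div r"
    using div_le_mono[OF assms(2), of r] assms(1) by simp
  moreover have "y div r \<le> z div r"
    using assms(3) by (rule div_le_mono)
  moreover have "z div r < w div r"
    using div_le_mono[OF assms(4), of r] assms(1) by simp
  moreover have "w div r < 5"
    using assms(5) by (simp add: less_mult_imp_div_less mult.commute)
  ultimately show ?thesis
    unfolding block_colouring_def by (rule five_colouring_avoids_pattern)
qed

lemma block_colouring_no_mono_copy:
  assumes "0 < r" "r < m" "r < n"
    and E: "(0, m) \<in> E" "(m - 1, m + n - 1) \<in> E" "(m - 1, m) \<in> E"
  shows "\<not> has_mono_copy (m + n) E (5 * r) (block_colouring r)"
proof
  assume "has_mono_copy (m + n) E (5 * r) (block_colouring r)"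
  then obtain f b where f_mono: "strict_mono_on {..<m + n} f"
    and f_range: "f ` {..<m + n} \<subseteq> {..<5 * r}"
    and f_edges: "\<forall>(i, j) \<in> E. block_colouring r (f i) (f j) = b"
    unfolding has_mono_copy_def by blast
  have "f 0 + (m - 1 - 0) \<le> f (m - 1)" "f m + (m + n - 1 - m) \<le> f (m + n - 1)"
    by (rule strict_mono_on_lessThan_add_diff_le[OF f_mono]; use assms(2,3) in auto)+
  then have xy: "f 0 + r \<le> f (m - 1)" and zw: "f m + r \<le> f (m + n - 1)"
    using assms(2,3) by arith+
  have "f (m - 1) < f m"
    by (rule strict_mono_onD[OF f_mono]) (use assms(2,3) in auto)
  then have yz: "f (m - 1) \<le> f m" by simp
  have "m + n - 1 \<in> {..<m + n}" using assms(3) by simp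
  then have wN: "f (m + n - 1) < 5 * r"
    using f_range by blast
  have "block_colouring r (f 0) (f m) = b" "block_colouring r (f (m - 1)) (f m) = b"
    "block_colouring r (f (m - 1)) (f (m + n - 1)) = b"
    using f_edges E by auto
  then show False
    using block_colouring_avoids_pattern[OF assms(1) xy yz zw wN] by blast
qed

theorem corollary3p3:
  fixes m n :: nat and E :: "(nat \<times> nat) set"
  assumes "ordered_graph (m + n) E"
    and "interval_chromatic (m + n) E = 2"
    and "independent E {0..<m}"
    and "independent E {m..<m + n}"
    and "(0, m) \<in> E"
    and "(m - 1, m + n - 1) \<in> E"
    and "(m - 1, m) \<in> E"
  shows "ordered_ramsey (m + n) E \<ge> 5 * (min m n - 1) + 1"
proof (cases "min m n - 1 = 0")
  case True
  have "0 < m + n"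
    using assms(1,5) unfolding ordered_graph_def by auto
  then have "\<not> has_mono_copy (m + n) E 0 c" for c
    unfolding has_mono_copy_def by auto
  then show ?thesis
    using less_ordered_ramsey[OF assms(1)] True by fastforce
next
  case False
  then have "\<not> has_mono_copy (m + n) E (5 * (min m n - 1)) (block_colouring (min m n - 1))"
    by (intro block_colouring_no_mono_copy assms(5-7)) auto
  then show ?thesis
    using less_ordered_ramsey[OF assms(1)] by fastforce
qed

end
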